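(* Let $q=2^s$, $s\ge1$, let $n$ be odd, and let $C_1,C_2\subseteq\mathbb F_q^n$ be cyclic codes with generating sets $I_1^{(q)},I_2^{(q)}\subseteq\mathbb Z_n$ which form a $q$-ary CSS-$T$ pair (in particular $C_2\subseteq C_1$). For $i=1,2$ let $I_i^{(2)}\subseteq\mathbb Z_n$ be the generating set of the binary cyclic code $\mathrm{tr}(C_i)$ (with respect to the same $\beta$). Then (1) $I_2^{(q)}\subseteq I_1^{(q)}$, and (2) $0\notin I_1^{(2)}+I_1^{(2)}+I_2^{(2)}$ (equivalently, $n\bmod n$ does not lie in this sum).
   Context: A cyclic code $C\subseteq\mathbb F_q^n$ with $\gcd(q,n)=1$ is an ideal of $\mathbb F_q[x]/(x^n-1)$ generated by a polynomial $g(x)\mid x^n-1$. Fix a primitive $n$-th root of unity $\beta$ in an extension of $\mathbb F_q$. The generating set of $C$ is $I=\{i\in\mathbb Z_n: g(\beta^i)\neq 0\}$ (the defining set is its complement). The Minkowski sum of $A,B\subseteq\mathbb Z_n$ is $A+B=\{a+b:a\in A,b\in B\}$. Let $\mathrm{tr}:\mathbb F_q\to\mathbb F_2$, $\mathrm{tr}(x)=\sum_{i=0}^{s-1}x^{2^i}$, applied coordinatewise; $\mathrm{tr}(C)=\{\mathrm{tr}(c):c\in C\}$ (this is a binary cyclic code). Let $\mathcal H=\mathbb C^q$ with orthonormal basis $\{|x\rangle:x\in\mathbb F_q\}$ and $\mathcal H^{\otimes n}$ with basis $|x\rangle=|x_1\rangle\otimes\cdots\otimes|x_n\rangle$, $x\in\mathbb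 F_q^n$. For $\lambda\in\mathbb F_q$, $T^{(\lambda)}=\sum_{x\in\mathbb F_q}e^{i\pi\,\mathrm{tr}(\lambda x)/4}|x\rangle\langle x|$, where $\mathrm{tr}(\lambda x)\in\{0,1\}$ is regarded as an integer. For $\mathbb F_q$-linear codes $C_2\subseteq C_1\subseteq\mathbb F_q^n$, the CSS code $\mathrm{CSS}(C_1,C_2)\subseteq\mathcal H^{\otimes n}$ is the complex linear span of the states $|w+C_2\rangle=|C_2|^{-1/2}\sum_{c\in C_2}|w+c\rangle$ for $w\in C_1$. The pair $(C_1,C_2)$ is a $q$-ary CSS-$T$ pair if $(T^{(\lambda)})^{\otimes n}$ maps $\mathrm{CSS}(C_1,C_2)$ into itself for every $\lambda\in\mathbb F_q$. *)

theory Defs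
  imports Complex_Main "HOL-Computational_Algebra.Polynomial"
begin

text \<open>Words of length n over a field: functions nat => 'a vanishing from index n on
  (coordinates are indexed by 0..n-1, i.e. by Z_n).\<close>
definition words :: "nat \<Rightarrow> (nat \<Rightarrow> 'a::zero) set" where
  "words n = {c. \<forall>i\<ge>n. c i = 0}"

definition poly_of_word :: "nat \<Rightarrow> (nat \<Rightarrow> 'a::comm_ring_1) \<Rightarrow> 'a poly" where
  "poly_of_word n c = (\<Sum>i<n. monom (c i) i)"

definition xn1 :: "nat \<Rightarrow> 'a::comm_ring_1 poly" where
  "xn1 n = monom 1 n - 1"

text \<open>C is the cyclic code of length n over the subfield K of 'a generated by g:
  g has coefficients in K, g divides x^n-1 in K[x], and C is the ideal generated by g
  in K[x]/(x^n-1), viewed as a set of words with entries in K.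
  (K = UNIV gives F_q; K = {0,1} gives the prime field F_2 when CARD('a) = 2^s.)\<close>
definition cyclic_code_gen :: "'a::field set \<Rightarrow> nat \<Rightarrow> 'a poly \<Rightarrow> (nat \<Rightarrow> 'a) set \<Rightarrow> bool" where
  "cyclic_code_gen K n g C \<longleftrightarrow>
     set (coeffs g) \<subseteq> K \<and>
     (\<exists>h. set (coeffs h) \<subseteq> K \<and> xn1 n = g * h) \<and>
     C = {c \<in> words n. (\<forall>i. c i \<in> K) \<and>
            (\<exists>f. set (coeffs f) \<subseteq> K \<and> poly_of_word n c = (f * g) mod xn1 n)}"

text \<open>Generating set I = {i in Z_n. g(beta^i) \<noteq> 0}, beta in an extension field 'b of 'a
  via the embedding emb.\<close>
definition gen_set :: "('a::zero \<Rightarrow> 'b::comm_ring_1) \<Rightarrow> 'b \<Rightarrow> nat \<Rightarrow> 'a poly \<Rightarrow> nat set" where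
  "gen_set emb \<beta> n g = {i. i < n \<and> poly (map_poly emb g) (\<beta> ^ i) \<noteq> 0}"

text \<open>Absolute trace F_q -> F_2, q = 2^s (values in the prime field {0,1} of 'a).\<close>
definition tr :: "nat \<Rightarrow> 'a::comm_ring_1 \<Rightarrow> 'a" where
  "tr s x = (\<Sum>i<s. x ^ (2 ^ i))"

definition trace_code :: "nat \<Rightarrow> (nat \<Rightarrow> 'a::comm_ring_1) set \<Rightarrow> (nat \<Rightarrow> 'a) set" where
  "trace_code s C = (\<lambda>c. \<lambda>i. tr s (c i)) ` C"

definition tr_int :: "nat \<Rightarrow> 'a::comm_ring_1 \<Rightarrow> int" where
  "tr_int s x = (if tr s x = 0 then 0 else 1)"

text \<open>States of H^{\<otimes> n}: functions from words to complex amplitudes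
  (the coefficient of |x>).\<close>
type_synonym 'a state = "(nat \<Rightarrow> 'a) \<Rightarrow> complex"

text \<open>(T^(lambda))^{\<otimes> n}: diagonal, |x> \<mapsto> prod_j exp(i pi tr(lambda x_j)/4) |x>.\<close>
definition T_op :: "nat \<Rightarrow> nat \<Rightarrow> 'a::comm_ring_1 \<Rightarrow> 'a state \<Rightarrow> 'a state" where
  "T_op s n lam \<psi> = (\<lambda>x. (\<Prod>j<n. exp (\<i> * of_real pi * of_int (tr_int s (lam * x j)) / 4)) * \<psi> x)"

definition coset_state :: "(nat \<Rightarrow> 'a::ab_group_add) set \<Rightarrow> (nat \<Rightarrow> 'a) \<Rightarrow> 'a state" where
  "coset_state C2 w = (\<lambda>x. complex_of_real (1 / sqrt (real (card C2))) *
                           (\<Sum>c\<in>C2. if x = (\<lambda>i. w i + c i) then 1 else 0))"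

definition cspan :: "'a state set \<Rightarrow> 'a state set" where
  "cspan S = {\<psi>. \<exists>F a. finite F \<and> F \<subseteq> S \<and> \<psi> = (\<lambda>x. \<Sum>v\<in>F. a v * v x)}"

definition CSS :: "(nat \<Rightarrow> 'a::ab_group_add) set \<Rightarrow> (nat \<Rightarrow> 'a) set \<Rightarrow> 'a state set" where
  "CSS C1 C2 = cspan (coset_state C2 ` C1)"

definition css_t_pair :: "nat \<Rightarrow> nat \<Rightarrow> (nat \<Rightarrow> 'a::comm_ring_1) set \<Rightarrow> (nat \<Rightarrow> 'a) set \<Rightarrow> bool" where
  "css_t_pair s n C1 C2 \<longleftrightarrow> C2 \<subseteq> C1 \<and>
     (\<forall>lam. \<forall>\<psi>\<in>CSS C1 C2. T_op s n lam \<psi> \<in> CSS C1 C2)"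

end

theory Submission
  imports
    Defs
    "HOL-Number_Theory.Residues"
    "HOL-Analysis.Complex_Transcendental"
    "Jordan_Normal_Form.Char_Poly"
begin

text \<open>
  (1) Reduced modulo \<open>x\<^sup>n - 1\<close>, the generator \<open>g\<^sub>2\<close> is a codeword of \<open>C\<^sub>2 \<subseteq> C\<^sub>1\<close>, hence a
  multiple of \<open>g\<^sub>1\<close> modulo \<open>x\<^sup>n - 1\<close>; evaluating at the roots \<open>\<beta>\<^sup>i\<close> of \<open>x\<^sup>n - 1\<close> shows that
  \<open>g\<^sub>1(\<beta>\<^sup>i) \<noteq> 0\<close> wherever \<open>g\<^sub>2(\<beta>\<^sup>i) \<noteq> 0\<close>.

  (2) The CSS-T condition for \<open>\<lambda> = 1\<close>, tested on coset states, shows that the weights of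
  \<open>tr(w + c)\<close> and \<open>tr(w)\<close> agree modulo 8 for \<open>w \<in> C\<^sub>1\<close>, \<open>c \<in> C\<^sub>2\<close>. For binary words this
  forces \<open>\<Sum>\<^sub>j x\<^sub>j y\<^sub>j z\<^sub>j = 0\<close> whenever \<open>x, y \<in> tr(C\<^sub>1)\<close> and \<open>z \<in> tr(C\<^sub>2)\<close>. Applied to the
  cyclic shifts of \<open>h\<^sub>1, h\<^sub>1, h\<^sub>2\<close> and combined by the discrete Fourier transform over \<open>\<beta>\<close>,
  this becomes \<open>n h\<^sub>1(\<beta>\<^sup>a) h\<^sub>1(\<beta>\<^sup>b) h\<^sub>2(\<beta>\<^sup>c) = 0\<close> whenever \<open>a + b + c \<equiv> 0 (mod n)\<close>, and
  \<open>n = 1\<close> in characteristic 2.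
\<close>

(* Char_Poly provides the locales field_hom and map_poly_idom_hom; it also loads HOL-Algebra,
   whose coeff and monom would otherwise shadow those of polynomials. *)
hide_const (open) UnivPoly.coeff UnivPoly.monom

lemma CHAR_eq_2_of_card:
  assumes "card (UNIV :: 'a::{field,finite} set) = 2 ^ s"
  shows "CHAR('a) = 2"
proof -
  have "prime CHAR('a)" by (simp add: prime_CHAR_semidom finite_imp_CHAR_pos)
  moreover have "CHAR('a) dvd 2 ^ s" using CHAR_dvd_CARD[where 'a='a] assms by simp
  ultimately show ?thesis using prime_dvd_power primes_dvd_imp_eq two_is_prime_nat by blast
qed

lemma of_nat_odd_CHAR_2:
  assumes "CHAR('a::comm_ring_1) = 2" "odd n"
  shows "of_nat n = (1::'a)"
proof -
  obtain m where "n = 2 * m + 1" using assms(2) oddE by blast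
  then show ?thesis using of_nat_CHAR[where 'a='a] assms(1) by simp
qed

lemma tr_add:
  assumes "CHAR('a::comm_ring_1) = 2"
  shows "tr s (x + y) = tr s x + tr s (y::'a)"
proof -
  have "(x + y) ^ 2 ^ i = x ^ 2 ^ i + y ^ 2 ^ i" for i
    using freshmans_dream'[where 'a='a and m="2 ^ i" and n=i] assms by simp
  then show ?thesis by (simp add: tr_def sum.distrib)
qed

lemma tr_0 [simp]: "tr s 0 = 0"
  by (simp add: tr_def power_0_left)

lemma square_eq_self_iff: "(x::'a::idom) ^ 2 = x \<longleftrightarrow> x \<in> {0, 1}"
proof
  assume "x ^ 2 = x"
  then have "x * (x - 1) = 0" by (simp add: algebra_simps power2_eq_square)
  then show "x \<in> {0, 1}" by auto
qed auto

lemma frobenius_field_hom: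
  assumes "CHAR('a::field) = 2"
  shows "field_hom (\<lambda>x::'a. x ^ 2)"
proof unfold_locales
  show "(x + y) ^ 2 = x ^ 2 + y ^ 2" for x y :: 'a
    by (rule freshmans_dream) (simp_all add: assms)
qed (auto simp: power_mult_distrib)

lemma coeffs_subset_iff:
  assumes "0 \<in> K"
  shows "set (coeffs p) \<subseteq> K \<longleftrightarrow> (\<forall>i. coeff p i \<in> K)"
proof
  assume "set (coeffs p) \<subseteq> K"
  moreover have "coeff p i \<in> set (coeffs p)" if "coeff p i \<noteq> 0" for i
    using that by (intro coeff_in_coeffs le_degree) auto
  ultimately show "\<forall>i. coeff p i \<in> K" using assms by (metis subsetD)
qed (auto simp: coeffs_def)

text \<open>The elements \<open>0, 1\<close> are the fixed points of the Frobenius map, which commutes with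
  polynomial division.\<close>
lemma coeff_mod_in_zero_one:
  assumes "CHAR('a::field) = 2" "\<forall>i. coeff p i \<in> {0, 1::'a}" "\<forall>i. coeff q i \<in> {0, 1::'a}"
  shows "\<forall>i. coeff (p mod q) i \<in> {0, 1}"
proof -
  interpret frobenius: field_hom "\<lambda>x::'a. x ^ 2" by (rule frobenius_field_hom[OF assms(1)])
  have fixed: "map_poly (\<lambda>x. x ^ 2) r = r \<longleftrightarrow> (\<forall>i. coeff r i \<in> {0, 1::'a})" for r
  proof -
    have "map_poly (\<lambda>x. x ^ 2) r = r \<longleftrightarrow> (\<forall>i. coeff r i ^ 2 = coeff r i)"
      by (simp add: poly_eq_iff coeff_map_poly)
    then show ?thesis by (simp only: square_eq_self_iff)
  qed
  have "map_poly (\<lambda>x. x ^ 2) p = p" "map_poly (\<lambda>x. x ^ 2) q = q"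
    using assms(2,3) fixed by blast+
  then have "map_poly (\<lambda>x. x ^ 2) (p mod q) = p mod q"
    by (simp add: frobenius.map_poly_mod)
  then show ?thesis using fixed by blast
qed

section \<open>Cyclic codes\<close>

lemma degree_xn1:
  assumes "n > 0"
  shows "degree (xn1 n :: 'a::field poly) = n"
proof -
  have "xn1 n = (monom 1 n + [:-1:] :: 'a poly)"
    by (simp add: xn1_def monom_0 one_pCons)
  then show ?thesis
    using assms by (simp add: degree_add_eq_left degree_monom_eq)
qed

lemma xn1_nonzero:
  assumes "n > 0"
  shows "xn1 n \<noteq> (0 :: 'a::field poly)"
  using degree_xn1[OF assms, where 'a='a] assms by (metis degree_0 less_irrefl)

lemma degree_mod_xn1_less:
  assumes "n > 0"
  shows "degree (p mod xn1 n :: 'a::field poly) < n"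
  using degree_mod_less[OF xn1_nonzero[OF assms], of p] degree_xn1[OF assms, where 'a='a] assms
  by auto

lemma coeff_xn1_zero_one:
  assumes "CHAR('a::comm_ring_1) = 2"
  shows "coeff (xn1 n :: 'a poly) i \<in> {0, 1}"
  using uminus_CHAR_2[OF assms, of 1] by (simp add: xn1_def)

lemma coeff_in_words: "degree p < n \<Longrightarrow> coeff p \<in> words n"
  by (simp add: words_def coeff_eq_0)

lemma poly_of_word_coeff:
  assumes "degree p < n"
  shows "poly_of_word n (coeff p) = p"
proof -
  have "{..<n} = {..n - 1}" using assms by auto
  then show ?thesis
    unfolding poly_of_word_def using poly_as_sum_of_monoms'[of p "n - 1"] assms by simp
qed

lemma poly_of_word_add: "poly_of_word n (\<lambda>i. c i + d i) = poly_of_word n c + poly_of_word n d"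
  unfolding poly_of_word_def by (simp add: sum.distrib add_monom[symmetric])

lemma poly_of_word_uminus: "poly_of_word n (\<lambda>i. - c i) = - poly_of_word n c"
  unfolding poly_of_word_def by (simp add: sum_negf[symmetric] minus_monom)

lemma cyclic_code_gen_eq:
  "cyclic_code_gen K n g C \<Longrightarrow>
     C = {c \<in> words n. (\<forall>i. c i \<in> K) \<and> (\<exists>f. set (coeffs f) \<subseteq> K \<and> poly_of_word n c = (f * g) mod xn1 n)}"
  by (simp add: cyclic_code_gen_def)

lemma cyclic_code_gen_subset: "cyclic_code_gen K n g C \<Longrightarrow> C \<subseteq> {c. \<forall>i. c i \<in> K}"
  unfolding cyclic_code_gen_def by blast

lemma coeff_mod_xn1_in_cyclic_code:
  assumes "cyclic_code_gen K n g C" "n > 0" "set (coeffs f) \<subseteq> K"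
    and "\<forall>i. coeff ((f * g) mod xn1 n) i \<in> K"
  shows "coeff ((f * g) mod xn1 n) \<in> C"
proof -
  have "degree ((f * g) mod xn1 n) < n" by (rule degree_mod_xn1_less[OF assms(2)])
  then show ?thesis
    using assms(3,4) by (auto simp: cyclic_code_gen_eq[OF assms(1)] coeff_in_words poly_of_word_coeff)
qed

lemma finite_words: "finite (words n :: (nat \<Rightarrow> 'a::{zero,finite}) set)"
proof -
  have "words n =
      {f :: nat \<Rightarrow> 'a. \<forall>x. (x \<in> {..<n} \<longrightarrow> f x \<in> UNIV) \<and> (x \<notin> {..<n} \<longrightarrow> f x = 0)}"
    unfolding words_def by auto
  then show ?thesis using finite_set_of_finite_funs[of "{..<n}" "UNIV :: 'a set" 0] by simp
qed

lemma finite_cyclic_code: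
  assumes "cyclic_code_gen K n g (C :: (nat \<Rightarrow> 'a::{field,finite}) set)"
  shows "finite C"
  using finite_words[where 'a='a, of n]
  by (rule finite_subset[rotated]) (auto simp: cyclic_code_gen_eq[OF assms])

definition word_subgroup :: "(nat \<Rightarrow> 'a::ab_group_add) set \<Rightarrow> bool" where
  "word_subgroup C \<longleftrightarrow>
     (\<lambda>i. 0) \<in> C \<and> (\<forall>x\<in>C. \<forall>y\<in>C. (\<lambda>i. x i + y i) \<in> C) \<and> (\<forall>x\<in>C. (\<lambda>i. - x i) \<in> C)"

lemma cyclic_code_word_subgroup:
  assumes "cyclic_code_gen UNIV n g (C :: (nat \<Rightarrow> 'a::field) set)"
  shows "word_subgroup C"
proof -
  have C: "C = {c \<in> words n. \<exists>f. poly_of_word n c = (f * g) mod xn1 n}"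
    using cyclic_code_gen_eq[OF assms] by simp
  have "(\<lambda>i. 0) \<in> C"
    unfolding C by (auto simp: words_def poly_of_word_def intro: exI[of _ 0])
  moreover have "(\<lambda>i. c i + d i) \<in> C" if cd: "c \<in> C" "d \<in> C" for c d
  proof -
    obtain e f where "c \<in> words n" "poly_of_word n c = (e * g) mod xn1 n"
      and "d \<in> words n" "poly_of_word n d = (f * g) mod xn1 n"
      using cd by (auto simp: C)
    then show ?thesis unfolding C
      by (auto simp: words_def poly_of_word_add distrib_right poly_mod_add_left intro!: exI[of _ "e + f"])
  qed
  moreover have "(\<lambda>i. - c i) \<in> C" if c: "c \<in> C" for c
  proof -
    obtain f where "c \<in> words n" "poly_of_word n c = (f * g) mod xn1 n"
      using c by (auto simp: C)
    then show ?thesis unfolding C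
      by (auto simp: words_def poly_of_word_uminus intro!: exI[of _ "- f"])
  qed
  ultimately show ?thesis by (simp add: word_subgroup_def)
qed

lemma trace_code_word_subgroup:
  assumes "CHAR('a::comm_ring_1) = 2" "word_subgroup (C :: (nat \<Rightarrow> 'a) set)"
  shows "word_subgroup (trace_code s C)"
proof -
  have C: "(\<lambda>i. 0) \<in> C" "\<And>c d. c \<in> C \<Longrightarrow> d \<in> C \<Longrightarrow> (\<lambda>i. c i + d i) \<in> C"
    using assms(2) by (auto simp: word_subgroup_def)
  have "(\<lambda>i. 0) \<in> trace_code s C"
    unfolding trace_code_def by (rule image_eqI[of _ _ "\<lambda>i. 0"]) (simp_all add: C)
  moreover have "(\<lambda>i. x i + y i) \<in> trace_code s C" if xy: "x \<in> trace_code s C" "y \<in> trace_code s C" for x y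
  proof -
    obtain c d where "c \<in> C" "d \<in> C" "x = (\<lambda>i. tr s (c i))" "y = (\<lambda>i. tr s (d i))"
      using xy unfolding trace_code_def by blast
    then show ?thesis
      unfolding trace_code_def
      by (intro image_eqI[of _ _ "\<lambda>i. c i + d i"]) (simp_all add: C tr_add[OF assms(1)])
  qed
  moreover have "(\<lambda>i. - x i) = x" for x :: "nat \<Rightarrow> 'a"
    by (rule ext) (rule uminus_CHAR_2[OF assms(1)])
  ultimately show ?thesis by (simp add: word_subgroup_def)
qed

lemma shift_in_binary_cyclic_code:
  assumes "CHAR('a::field) = 2" "n > 0" "cyclic_code_gen {0, 1} n h (D :: (nat \<Rightarrow> 'a) set)"
  shows "coeff ((monom 1 k * h) mod xn1 n) \<in> D"
proof (rule coeff_mod_xn1_in_cyclic_code[OF assms(3,2)])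
  have "\<forall>i. coeff h i \<in> {0, 1}"
    using assms(3) coeffs_subset_iff[of "{0, 1}" h] by (simp add: cyclic_code_gen_def)
  then have "\<forall>i. coeff (monom 1 k * h) i \<in> {0, 1::'a}"
    by (simp add: coeff_monom_mult)
  then show "\<forall>i. coeff ((monom 1 k * h) mod xn1 n) i \<in> {0, 1}"
    using coeff_mod_in_zero_one[OF assms(1)] coeff_xn1_zero_one[OF assms(1)] by blast
qed (simp add: coeffs_subset_iff coeff_monom)


section \<open>Evaluation at \<open>n\<close>-th roots of unity\<close>

lemma field_homI:
  assumes "emb 1 = 1" "\<And>x y. emb (x + y) = emb x + emb y" "\<And>x y. emb (x * y) = emb x * emb y"
  shows "field_hom (emb :: 'a::field \<Rightarrow> 'b::field)"
proof -
  have "emb 0 = 0" using assms(2)[of 0 0] by (metis add.right_neutral add_left_cancel)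
  then show ?thesis by unfold_locales (use assms in auto)
qed

context field_hom
begin

lemma poly_map_poly_mod_xn1:
  assumes "z ^ n = 1"
  shows "poly (map_poly hom (p mod xn1 n)) z = poly (map_poly hom p) z"
proof -
  interpret P: map_poly_idom_hom hom ..
  have "poly (map_poly hom (xn1 n)) z = 0"
    using assms by (simp add: xn1_def P.hom_minus poly_monom)
  then show ?thesis by (simp add: map_poly_mod poly_mod)
qed

lemma poly_map_poly_eq_sum:
  assumes "degree p < n"
  shows "poly (map_poly hom p) z = (\<Sum>j<n. hom (coeff p j) * z ^ j)"
proof -
  interpret P: map_poly_idom_hom hom ..
  have "poly (map_poly hom p) z = poly (map_poly hom (\<Sum>j<n. monom (coeff p j) j)) z"
    using poly_of_word_coeff[OF assms] by (simp add: poly_of_word_def)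
  also have "\<dots> = (\<Sum>j<n. hom (coeff p j) * z ^ j)"
    by (simp add: P.hom_sum poly_sum poly_monom)
  finally show ?thesis .
qed

text \<open>\<open>(monom 1 k * p) mod xn1 n\<close> is the \<open>k\<close>-th cyclic shift of \<open>p\<close>.\<close>
lemma spectrum_cyclic_shift:
  assumes "n > 0" "z ^ n = 1"
  shows "(\<Sum>j<n. hom (coeff ((monom 1 k * p) mod xn1 n) j) * z ^ j) = z ^ k * poly (map_poly hom p) z"
proof -
  interpret P: map_poly_idom_hom hom ..
  show ?thesis
    using poly_map_poly_eq_sum[OF degree_mod_xn1_less[OF assms(1)], symmetric]
    by (simp add: poly_map_poly_mod_xn1[OF assms(2)] P.hom_mult poly_monom)
qed

lemma gen_set_mono:
  assumes "n > 0" "\<beta> ^ n = 1" "cyclic_code_gen UNIV n g1 C1" "cyclic_code_gen UNIV n g2 C2"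
    and "C2 \<subseteq> C1"
  shows "gen_set hom \<beta> n g2 \<subseteq> gen_set hom \<beta> n g1"
proof
  interpret P: map_poly_idom_hom hom ..
  fix i assume "i \<in> gen_set hom \<beta> n g2"
  then have i: "i < n" "poly (map_poly hom g2) (\<beta> ^ i) \<noteq> 0" by (auto simp: gen_set_def)
  have root: "(\<beta> ^ i) ^ n = 1"
    using assms(2) by (metis power_mult mult.commute power_one)
  have "coeff ((1 * g2) mod xn1 n) \<in> C2"
    by (rule coeff_mod_xn1_in_cyclic_code[OF assms(4,1)]) auto
  then have "coeff (g2 mod xn1 n) \<in> C1" using assms(5) by auto
  then obtain f where "poly_of_word n (coeff (g2 mod xn1 n)) = (f * g1) mod xn1 n"
    using cyclic_code_gen_eq[OF assms(3)] by auto
  then have f: "g2 mod xn1 n = (f * g1) mod xn1 n"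
    using poly_of_word_coeff[OF degree_mod_xn1_less[OF assms(1), of g2]] by simp
  have "poly (map_poly hom g2) (\<beta> ^ i) = poly (map_poly hom f) (\<beta> ^ i) * poly (map_poly hom g1) (\<beta> ^ i)"
    using arg_cong[OF f, of "\<lambda>p. poly (map_poly hom p) (\<beta> ^ i)"]
    by (simp add: poly_map_poly_mod_xn1[OF root] P.hom_mult)
  then show "i \<in> gen_set hom \<beta> n g1" using i by (auto simp: gen_set_def)
qed

end

section \<open>Discrete Fourier transform over a primitive root of unity\<close>

lemma sum_product_triple:
  "(\<Sum>j\<in>J. (\<Sum>k\<in>K. A k j) * (\<Sum>l\<in>L. B l j) * (\<Sum>m\<in>M. C m j)) =
   (\<Sum>k\<in>K. \<Sum>l\<in>L. \<Sum>m\<in>M. \<Sum>j\<in>J. A k j * B l j * (C m j :: 'a::comm_semiring_0))"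
proof -
  have "(\<Sum>k\<in>K. A k j) * (\<Sum>l\<in>L. B l j) * (\<Sum>m\<in>M. C m j)
      = (\<Sum>k\<in>K. \<Sum>l\<in>L. \<Sum>m\<in>M. A k j * B l j * C m j)" for j
  proof -
    have "(\<Sum>k\<in>K. A k j) * (\<Sum>l\<in>L. B l j) * (\<Sum>m\<in>M. C m j)
        = (\<Sum>k\<in>K. \<Sum>l\<in>L. A k j * B l j) * (\<Sum>m\<in>M. C m j)"
      by (simp only: sum_product)
    also have "\<dots> = (\<Sum>k\<in>K. (\<Sum>l\<in>L. A k j * B l j) * (\<Sum>m\<in>M. C m j))"
      by (rule sum_distrib_right)
    also have "\<dots> = (\<Sum>k\<in>K. \<Sum>l\<in>L. \<Sum>m\<in>M. A k j * B l j * C m j)"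
      by (rule sum.cong[OF refl]) (simp only: sum_product)
    finally show ?thesis .
  qed
  then have "(\<Sum>j\<in>J. (\<Sum>k\<in>K. A k j) * (\<Sum>l\<in>L. B l j) * (\<Sum>m\<in>M. C m j)) =
        (\<Sum>j\<in>J. \<Sum>k\<in>K. \<Sum>l\<in>L. \<Sum>m\<in>M. A k j * B l j * C m j)"
    by simp
  also have "\<dots> = (\<Sum>k\<in>K. \<Sum>l\<in>L. \<Sum>m\<in>M. \<Sum>j\<in>J. A k j * B l j * C m j)"
    by (subst sum.swap, rule sum.cong[OF refl], subst sum.swap, rule sum.cong[OF refl], rule sum.swap)
  finally show ?thesis .
qed

locale primitive_root_of_unity =
  fixes n :: nat and \<beta> :: "'b::field"
  assumes n_pos: "n > 0"
    and root: "\<beta> ^ n = 1"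
    and primitive: "\<And>k. 0 < k \<Longrightarrow> k < n \<Longrightarrow> \<beta> ^ k \<noteq> 1"
begin

lemma root_nonzero: "\<beta> \<noteq> 0"
  using root n_pos by (cases n) auto

lemma power_root_of_unity: "(\<beta> ^ a) ^ n = 1"
  by (metis mult.commute power_mult power_one root)

lemma inverse_power_root_of_unity: "(inverse \<beta> ^ a) ^ n = 1"
  using power_root_of_unity by (simp add: power_inverse)

lemma power_inj:
  assumes "a < n" "b < n" "\<beta> ^ a = \<beta> ^ b"
  shows "a = b"
proof -
  have False if "\<beta> ^ i = \<beta> ^ j" "i < j" "j < n" for i j
  proof -
    have "\<beta> ^ (j - i) * \<beta> ^ i = \<beta> ^ j"
      using \<open>i < j\<close> by (simp flip: power_add)
    then have "\<beta> ^ (j - i) = 1"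
      using that(1) root_nonzero by simp
    then show False using primitive[of "j - i"] that by simp
  qed
  then show ?thesis using assms by (metis linorder_neqE)
qed

lemma sum_powers_ratio:
  assumes "a < n" "b < n"
  shows "(\<Sum>k<n. (\<beta> ^ a * inverse \<beta> ^ b) ^ k) = (if a = b then of_nat n else 0)"
proof (cases "a = b")
  case True
  then show ?thesis using root_nonzero by (simp add: power_inverse)
next
  case False
  define \<gamma> where "\<gamma> = \<beta> ^ a * inverse \<beta> ^ b"
  have "\<gamma> \<noteq> 1"
    using power_inj[OF assms] False root_nonzero by (auto simp: \<gamma>_def power_inverse field_simps)
  moreover have "\<gamma> ^ n = 1"
    by (simp add: \<gamma>_def power_mult_distrib power_root_of_unity inverse_power_root_of_unity)
  ultimately show ?thesis
    using False geometric_sum[of \<gamma> n] by (simp add: \<gamma>_def)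
qed

lemma dft_inversion:
  assumes "j < n"
  shows "(\<Sum>a<n. (\<Sum>i<n. E i * (\<beta> ^ a) ^ i) * (inverse \<beta> ^ a) ^ j) = of_nat n * E j"
proof -
  have kernel: "(\<beta> ^ a) ^ i * (inverse \<beta> ^ a) ^ j = (\<beta> ^ i * inverse \<beta> ^ j) ^ a" for a i
    by (metis mult.commute power_mult power_mult_distrib)
  have "(\<Sum>a<n. (\<Sum>i<n. E i * (\<beta> ^ a) ^ i) * (inverse \<beta> ^ a) ^ j)
      = (\<Sum>a<n. \<Sum>i<n. E i * (\<beta> ^ i * inverse \<beta> ^ j) ^ a)"
    by (simp add: sum_distrib_right mult.assoc flip: kernel)
  also have "\<dots> = (\<Sum>i<n. E i * (\<Sum>a<n. (\<beta> ^ i * inverse \<beta> ^ j) ^ a))"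
    by (subst sum.swap) (simp add: sum_distrib_left)
  also have "\<dots> = (\<Sum>i<n. E i * (if i = j then of_nat n else 0))"
    by (rule sum.cong) (simp_all add: sum_powers_ratio assms)
  also have "\<dots> = of_nat n * E j"
    using assms by (simp add: if_distrib mult.commute cong: if_cong)
  finally show ?thesis .
qed

text \<open>If the \<open>E k\<close> are the cyclic shifts of a word with spectrum \<open>H\<close>, the twisted combination
  \<open>\<Sum>\<^sub>k \<beta>\<^sup>-\<^sup>b\<^sup>k E k\<close> is the character \<open>\<beta>\<^sup>-\<^sup>b\<^sup>j\<close> scaled by \<open>H b\<close>.\<close>
lemma sum_twisted_shifts:
  assumes "of_nat n \<noteq> (0::'b)"
    and shifts: "\<And>k a. k < n \<Longrightarrow> a < n \<Longrightarrow> (\<Sum>j<n. E k j * (\<beta> ^ a) ^ j) = (\<beta> ^ a) ^ k * H a"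
    and "j < n" "b < n"
  shows "(\<Sum>k<n. (inverse \<beta> ^ b) ^ k * E k j) = H b * (inverse \<beta> ^ b) ^ j"
proof -
  have inv: "of_nat n * E k j = (\<Sum>a<n. (\<beta> ^ a) ^ k * H a * (inverse \<beta> ^ a) ^ j)" if "k < n" for k
    using dft_inversion[OF assms(3), of "E k"] shifts[OF that] by simp
  have "of_nat n * (\<Sum>k<n. (inverse \<beta> ^ b) ^ k * E k j)
      = (\<Sum>k<n. (inverse \<beta> ^ b) ^ k * (\<Sum>a<n. (\<beta> ^ a) ^ k * H a * (inverse \<beta> ^ a) ^ j))"
    by (simp add: sum_distrib_left mult.left_commute[of "of_nat n"] inv)
  also have "\<dots> = (\<Sum>a<n. H a * (inverse \<beta> ^ a) ^ j * (\<Sum>k<n. (\<beta> ^ a * inverse \<beta> ^ b) ^ k))"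
  proof -
    have "(\<Sum>k<n. (inverse \<beta> ^ b) ^ k * (\<Sum>a<n. (\<beta> ^ a) ^ k * H a * (inverse \<beta> ^ a) ^ j))
        = (\<Sum>k<n. \<Sum>a<n. H a * (inverse \<beta> ^ a) ^ j * (\<beta> ^ a * inverse \<beta> ^ b) ^ k)"
      by (simp add: sum_distrib_left power_mult_distrib mult_ac)
    then show ?thesis by (subst (asm) sum.swap) (simp add: sum_distrib_left)
  qed
  also have "\<dots> = (\<Sum>a<n. H a * (inverse \<beta> ^ a) ^ j * (if a = b then of_nat n else 0))"
    by (rule sum.cong) (simp_all add: sum_powers_ratio assms(4))
  also have "\<dots> = of_nat n * (H b * (inverse \<beta> ^ b) ^ j)"
    using assms(4) by (simp add: if_distrib mult_ac cong: if_cong)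
  finally show ?thesis using assms(1) by simp
qed

lemma triple_spectra_product_eq_0:
  assumes "of_nat n \<noteq> (0::'b)"
    and E: "\<And>k a. k < n \<Longrightarrow> a < n \<Longrightarrow> (\<Sum>j<n. E k j * (\<beta> ^ a) ^ j) = (\<beta> ^ a) ^ k * HE a"
    and F: "\<And>k a. k < n \<Longrightarrow> a < n \<Longrightarrow> (\<Sum>j<n. F k j * (\<beta> ^ a) ^ j) = (\<beta> ^ a) ^ k * HF a"
    and G: "\<And>k a. k < n \<Longrightarrow> a < n \<Longrightarrow> (\<Sum>j<n. G k j * (\<beta> ^ a) ^ j) = (\<beta> ^ a) ^ k * HG a"
    and orth: "\<And>k l m. (\<Sum>j<n. E k j * F l j * G m j) = 0"
    and "a < n" "b < n" "c < n" "n dvd a + b + c"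
  shows "HE a * HF b * HG c = 0"
proof -
  define u v w where "u k = (inverse \<beta> ^ a) ^ k" and "v k = (inverse \<beta> ^ b) ^ k"
    and "w k = (inverse \<beta> ^ c) ^ k" for k
  have P: "(\<Sum>k<n. u k * E k j) = HE a * (inverse \<beta> ^ a) ^ j" if "j < n" for j
    unfolding u_def by (rule sum_twisted_shifts[OF assms(1) E that \<open>a < n\<close>])
  have Q: "(\<Sum>l<n. v l * F l j) = HF b * (inverse \<beta> ^ b) ^ j" if "j < n" for j
    unfolding v_def by (rule sum_twisted_shifts[OF assms(1) F that \<open>b < n\<close>])
  have R: "(\<Sum>m<n. w m * G m j) = HG c * (inverse \<beta> ^ c) ^ j" if "j < n" for j
    unfolding w_def by (rule sum_twisted_shifts[OF assms(1) G that \<open>c < n\<close>])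
  have "0 = (\<Sum>k<n. \<Sum>l<n. \<Sum>m<n. u k * v l * w m * (\<Sum>j<n. E k j * F l j * G m j))"
    by (simp add: orth)
  also have "\<dots> = (\<Sum>j<n. (\<Sum>k<n. u k * E k j) * (\<Sum>l<n. v l * F l j) * (\<Sum>m<n. w m * G m j))"
    by (subst sum_product_triple) (simp add: sum_distrib_left mult_ac)
  also have "\<dots> = (\<Sum>j<n. HE a * HF b * HG c * (inverse \<beta> ^ (a + b + c)) ^ j)"
    by (rule sum.cong) (simp_all add: P Q R power_add power_mult_distrib mult_ac)
  also have "\<dots> = of_nat n * (HE a * HF b * HG c)"
    using \<open>n dvd a + b + c\<close>
    by (auto simp: inverse_power_root_of_unity mult.commute[of n] power_mult elim!: dvdE)
  finally show ?thesis using assms(1) by simp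
qed

end

section \<open>Weights of binary words\<close>

definition weight :: "nat \<Rightarrow> (nat \<Rightarrow> 'a::zero) \<Rightarrow> int" where
  "weight n x = (\<Sum>j<n. if x j = 0 then 0 else 1)"

lemma weight_add_binary:
  assumes "CHAR('a::field) = 2" "\<forall>j. x j \<in> {0, 1::'a}" "\<forall>j. y j \<in> {0, 1::'a}"
  shows "weight n (\<lambda>j. x j + y j) = weight n x + weight n y - 2 * weight n (\<lambda>j. x j * y j)"
proof -
  have "(1::'a) + 1 = 0" using of_nat_CHAR[where 'a='a] assms(1) by simp
  then have "(if x j + y j = 0 then 0 else 1 :: int)
      = (if x j = 0 then 0 else 1) + (if y j = 0 then 0 else 1) - 2 * (if x j * y j = 0 then 0 else 1)" for j
  proof -
    have "x j \<in> {0, 1}" "y j \<in> {0, 1}" using assms(2,3) by blast+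
    with \<open>1 + 1 = 0\<close> show ?thesis by auto
  qed
  then show ?thesis by (simp add: weight_def sum.distrib sum_subtractf sum_distrib_left)
qed

lemma sum_binary_eq_of_int_weight:
  assumes "\<forall>j. x j \<in> {0, 1::'a::ring_1}"
  shows "(\<Sum>j<n. x j) = of_int (weight n x)"
  unfolding weight_def of_int_sum by (rule sum.cong) (use assms in auto)

text \<open>Applying \<open>weight_add_binary\<close> with \<open>x = 0\<close>, \<open>x\<^sub>1\<close>, \<open>x\<^sub>2\<close> and \<open>x\<^sub>1 + x\<^sub>2\<close> turns the
  congruences modulo 8 into evenness of the weight of \<open>x\<^sub>1 x\<^sub>2 y\<close>.\<close>
lemma sum_triple_product_eq_0:
  assumes char: "CHAR('a::field) = 2"
    and binary: "S \<union> T \<subseteq> {x. \<forall>j. x j \<in> {0, 1::'a}}"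
    and zero: "(\<lambda>j. 0) \<in> S"
    and add: "\<And>x y. x \<in> S \<Longrightarrow> y \<in> S \<Longrightarrow> (\<lambda>j. x j + y j) \<in> S"
    and cong: "\<And>x y. x \<in> S \<Longrightarrow> y \<in> T \<Longrightarrow> 8 dvd weight n (\<lambda>j. x j + y j) - weight n x"
    and x1: "x1 \<in> S" and x2: "x2 \<in> S" and y: "y \<in> T"
  shows "(\<Sum>j<n. x1 j * x2 j * y j) = 0"
proof -
  have bin: "\<forall>j. x j \<in> {0, 1}" if "x \<in> S \<union> T" for x
    using binary that by auto
  have bin_mult: "\<forall>j. x j * z j \<in> {0, 1::'a}" if "\<forall>j. x j \<in> {0, 1}" "\<forall>j. z j \<in> {0, 1}" for x z
  proof
    fix j
    have "x j \<in> {0, 1}" "z j \<in> {0, 1}" using that by blast+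
    then show "x j * z j \<in> {0, 1}" by auto
  qed
  have "8 dvd weight n y"
    using cong[OF zero y] by (simp add: weight_def)
  have four: "4 dvd weight n (\<lambda>j. x j * y j)" if x: "x \<in> S" for x
  proof -
    have "8 dvd weight n y - 2 * weight n (\<lambda>j. x j * y j)"
      using cong[OF x y] weight_add_binary[OF char bin bin, of x y n] x y by simp
    with \<open>8 dvd weight n y\<close> show ?thesis by presburger
  qed
  have "(\<lambda>j. (x1 j + x2 j) * y j) = (\<lambda>j. x1 j * y j + x2 j * y j)"
    by (simp add: distrib_right)
  moreover have "(\<lambda>j. x1 j * y j * (x2 j * y j)) = (\<lambda>j. x1 j * x2 j * y j)"
    using bin[of y] y by (auto simp: fun_eq_iff)
  ultimately have "weight n (\<lambda>j. (x1 j + x2 j) * y j)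
      = weight n (\<lambda>j. x1 j * y j) + weight n (\<lambda>j. x2 j * y j) - 2 * weight n (\<lambda>j. x1 j * x2 j * y j)"
    using weight_add_binary[OF char bin_mult bin_mult, of x1 y x2 y n] bin x1 x2 y by simp
  then have "2 dvd weight n (\<lambda>j. x1 j * x2 j * y j)"
    using four[OF x1] four[OF x2] four[OF add[OF x1 x2]] by presburger
  then obtain k where "weight n (\<lambda>j. x1 j * x2 j * y j) = 2 * k" ..
  moreover have "(2::'a) = 0"
    using of_nat_CHAR[where 'a='a] char by simp
  ultimately show ?thesis
    using sum_binary_eq_of_int_weight[OF bin_mult[OF bin_mult]] bin x1 x2 y by simp
qed

section \<open>Weight congruences of CSS-T pairs\<close>

lemma coset_state_apply:
  assumes "finite C2"
  shows "coset_state C2 w x =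
    (if (\<lambda>i. x i - w i) \<in> C2 then complex_of_real (1 / sqrt (real (card C2))) else 0)"
proof -
  have "(x = (\<lambda>i. w i + c i)) \<longleftrightarrow> (\<lambda>i. x i - w i) = c" for c
    by (auto simp: fun_eq_iff algebra_simps)
  then show ?thesis using assms by (simp add: coset_state_def)
qed

lemma CSS_translation_invariant:
  assumes "finite C2" "word_subgroup C2" "\<psi> \<in> CSS C1 C2" "c \<in> C2"
  shows "\<psi> (\<lambda>i. x i + c i) = \<psi> x"
proof -
  have add: "\<And>u v. u \<in> C2 \<Longrightarrow> v \<in> C2 \<Longrightarrow> (\<lambda>i. u i + v i) \<in> C2" and "(\<lambda>i. - c i) \<in> C2"
    using assms(2,4) by (auto simp: word_subgroup_def)
  have shift: "(\<lambda>i. x i + c i - w i) \<in> C2 \<longleftrightarrow> (\<lambda>i. x i - w i) \<in> C2" for w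
  proof
    assume "(\<lambda>i. x i + c i - w i) \<in> C2"
    from add[OF this \<open>(\<lambda>i. - c i) \<in> C2\<close>] show "(\<lambda>i. x i - w i) \<in> C2" by simp
  next
    assume "(\<lambda>i. x i - w i) \<in> C2"
    from add[OF this \<open>c \<in> C2\<close>] show "(\<lambda>i. x i + c i - w i) \<in> C2" by (simp add: algebra_simps)
  qed
  obtain F a where F: "F \<subseteq> coset_state C2 ` C1" and \<psi>: "\<psi> = (\<lambda>x. \<Sum>v\<in>F. a v * v x)"
    using assms(3) by (auto simp: CSS_def cspan_def)
  have "v (\<lambda>i. x i + c i) = v x" if "v \<in> F" for v
    using that F shift by (auto simp: coset_state_apply[OF assms(1)])
  then show ?thesis unfolding \<psi> by (auto intro: sum.cong)
qed

lemma T_op_eq_exp_weight: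
  "T_op s n lam \<psi> x = exp (\<i> * of_real pi * of_int (weight n (\<lambda>j. tr s (lam * x j))) / 4) * \<psi> x"
proof -
  have "\<i> * of_real pi * of_int (weight n (\<lambda>j. tr s (lam * x j))) / 4
      = (\<Sum>j<n. \<i> * of_real pi * of_int (tr_int s (lam * x j)) / 4)"
    by (simp add: weight_def tr_int_def sum_distrib_left sum_divide_distrib)
  then show ?thesis by (simp add: T_op_def exp_sum)
qed

lemma exp_quarter_pi_eq_imp_dvd:
  fixes A B :: int
  assumes "exp (\<i> * of_real pi * of_int A / 4) = exp (\<i> * of_real pi * of_int B / 4)"
  shows "8 dvd B - A"
proof -
  obtain m :: int where "\<i> * of_real pi * of_int A / 4 = \<i> * of_real pi * of_int B / 4 + of_int (2 * m) * pi * \<i>"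
    using assms by (auto simp: exp_eq)
  then have "(\<i> * of_real pi / 4) * of_int A = (\<i> * of_real pi / 4) * of_int (B + 8 * m)"
    by (simp add: field_simps)
  then have "(of_int A :: complex) = of_int (B + 8 * m)" by simp
  then have "A = B + 8 * m" by (simp only: of_int_eq_iff)
  then show ?thesis by simp
qed

text \<open>Apply \<open>T\<^sup>(\<^sup>1\<^sup>)\<close> to the coset state \<open>|w + C\<^sub>2\<rangle>\<close>: the image is again invariant under
  translation by \<open>c \<in> C\<^sub>2\<close>, so the phases at \<open>w\<close> and \<open>w + c\<close> agree.\<close>
lemma css_t_pair_weight_cong:
  assumes "css_t_pair s n C1 C2" "finite C2" "word_subgroup C2" "w \<in> C1" "c \<in> C2"
  shows "8 dvd weight n (\<lambda>j. tr s (w j + c j)) - weight n (\<lambda>j. tr s (w j))"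
proof -
  define \<psi> where "\<psi> = coset_state C2 w"
  have \<psi>: "\<psi> \<in> CSS C1 C2"
    unfolding CSS_def cspan_def using assms(4)
    by (auto simp: \<psi>_def intro!: exI[of _ "{\<psi>}"] exI[of _ "\<lambda>_. 1"])
  then have T\<psi>: "T_op s n 1 \<psi> \<in> CSS C1 C2"
    using assms(1) by (simp add: css_t_pair_def)
  have "\<psi> w \<noteq> 0"
    using assms(2,3) by (auto simp: \<psi>_def coset_state_apply word_subgroup_def card_gt_0_iff)
  moreover have "\<psi> (\<lambda>j. w j + c j) = \<psi> w"
    by (rule CSS_translation_invariant[OF assms(2,3) \<psi> assms(5)])
  moreover have "T_op s n 1 \<psi> (\<lambda>j. w j + c j) = T_op s n 1 \<psi> w"
    by (rule CSS_translation_invariant[OF assms(2,3) T\<psi> assms(5)])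
  ultimately have "exp (\<i> * of_real pi * of_int (weight n (\<lambda>j. tr s (w j))) / 4)
      = exp (\<i> * of_real pi * of_int (weight n (\<lambda>j. tr s (w j + c j))) / 4)"
    by (simp add: T_op_eq_exp_weight)
  then show ?thesis by (rule exp_quarter_pi_eq_imp_dvd)
qed

lemma css_t_pair_trace_triple_product:
  assumes char: "CHAR('a::field) = 2" and css: "css_t_pair s n C1 C2"
    and "word_subgroup C1" "word_subgroup C2" "finite C2"
    and binary: "trace_code s C1 \<union> trace_code s C2 \<subseteq> {x. \<forall>j. x j \<in> {0, 1::'a}}"
    and "x \<in> trace_code s C1" "y \<in> trace_code s C1" "z \<in> trace_code s C2"
  shows "(\<Sum>j<n. x j * y j * z j) = 0"
proof (rule sum_triple_product_eq_0[OF char binary _ _ _ assms(7-9)])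
  have "word_subgroup (trace_code s C1)"
    by (rule trace_code_word_subgroup[OF char assms(3)])
  then show "(\<lambda>j. 0) \<in> trace_code s C1"
    and "\<And>x y. x \<in> trace_code s C1 \<Longrightarrow> y \<in> trace_code s C1 \<Longrightarrow> (\<lambda>j. x j + y j) \<in> trace_code s C1"
    unfolding word_subgroup_def by blast+
next
  fix x y assume "x \<in> trace_code s C1" "y \<in> trace_code s C2"
  then obtain w c where wc: "w \<in> C1" "c \<in> C2"
    and xy: "x = (\<lambda>j. tr s (w j))" "y = (\<lambda>j. tr s (c j))"
    unfolding trace_code_def by blast
  from css_t_pair_weight_cong[OF css assms(5,4) wc]
  show "8 dvd weight n (\<lambda>j. x j + y j) - weight n x"
    unfolding xy by (simp only: tr_add[OF char])
qed

lemma (in primitive_root_of_unity) zero_notin_gen_set_sums: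
  fixes emb :: "'a::field \<Rightarrow> 'b"
  assumes emb: "field_hom emb" and char: "CHAR('a) = 2" and "of_nat n \<noteq> (0::'b)"
    and codes: "cyclic_code_gen {0, 1} n h1 D1" "cyclic_code_gen {0, 1} n h2 D2"
      "cyclic_code_gen {0, 1} n h3 D3"
    and orth: "\<And>x y z. x \<in> D1 \<Longrightarrow> y \<in> D2 \<Longrightarrow> z \<in> D3 \<Longrightarrow> (\<Sum>j<n. x j * y j * z j) = 0"
  shows "0 \<notin> {(a + b + c) mod n | a b c.
    a \<in> gen_set emb \<beta> n h1 \<and> b \<in> gen_set emb \<beta> n h2 \<and> c \<in> gen_set emb \<beta> n h3}"
proof
  assume "0 \<in> {(a + b + c) mod n | a b c.
    a \<in> gen_set emb \<beta> n h1 \<and> b \<in> gen_set emb \<beta> n h2 \<and> c \<in> gen_set emb \<beta> n h3}"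
  then obtain a b c where gen: "a \<in> gen_set emb \<beta> n h1" "b \<in> gen_set emb \<beta> n h2"
    "c \<in> gen_set emb \<beta> n h3" and "0 = (a + b + c) mod n"
    by blast
  then have "n dvd a + b + c" by (simp add: dvd_eq_mod_eq_0)
  interpret emb: field_hom emb by (fact emb)
  define shift where "shift h k j = emb (coeff ((monom 1 k * h) mod xn1 n) j)" for h k j
  have spectrum: "(\<Sum>j<n. shift h k j * (\<beta> ^ x) ^ j) = (\<beta> ^ x) ^ k * poly (map_poly emb h) (\<beta> ^ x)"
    for h k x
    unfolding shift_def by (rule emb.spectrum_cyclic_shift[OF n_pos power_root_of_unity])
  have "(\<Sum>j<n. shift h1 k j * shift h2 l j * shift h3 m j) = 0" for k l m
  proof -
    have "(\<Sum>j<n. shift h1 k j * shift h2 l j * shift h3 m j)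
        = emb (\<Sum>j<n. coeff ((monom 1 k * h1) mod xn1 n) j * coeff ((monom 1 l * h2) mod xn1 n) j
                        * coeff ((monom 1 m * h3) mod xn1 n) j)"
      by (simp add: shift_def hom_distribs)
    also have "\<dots> = 0"
      using orth[OF shift_in_binary_cyclic_code[OF char n_pos codes(1)]
          shift_in_binary_cyclic_code[OF char n_pos codes(2)]
          shift_in_binary_cyclic_code[OF char n_pos codes(3)]] by simp
    finally show ?thesis .
  qed
  then have "poly (map_poly emb h1) (\<beta> ^ a) * poly (map_poly emb h2) (\<beta> ^ b)
      * poly (map_poly emb h3) (\<beta> ^ c) = 0"
    using gen \<open>n dvd a + b + c\<close>
    by (intro triple_spectra_product_eq_0[OF assms(3) spectrum spectrum spectrum])
      (auto simp: gen_set_def)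
  then show False using gen by (auto simp: gen_set_def)
qed

theorem mainTheorem11:
  fixes s n :: nat
    and emb :: "'a::{field,finite} \<Rightarrow> 'b::field"
    and \<beta> :: 'b
    and g1 g2 h1 h2 :: "'a poly"
    and C1 C2 :: "(nat \<Rightarrow> 'a) set"
  assumes "s \<ge> 1" and "card (UNIV :: 'a set) = 2 ^ s" and "odd n"
    and "emb 1 = 1" and "\<And>x y. emb (x + y) = emb x + emb y" and "\<And>x y. emb (x * y) = emb x * emb y"
    and "\<beta> ^ n = 1" and "\<And>k. 0 < k \<Longrightarrow> k < n \<Longrightarrow> \<beta> ^ k \<noteq> 1"
    and "cyclic_code_gen UNIV n g1 C1" and "cyclic_code_gen UNIV n g2 C2"
    and "css_t_pair s n C1 C2"
    and "cyclic_code_gen {0, 1} n h1 (trace_code s C1)"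
    and "cyclic_code_gen {0, 1} n h2 (trace_code s C2)"
  shows "gen_set emb \<beta> n g2 \<subseteq> gen_set emb \<beta> n g1 \<and>
         0 \<notin> {(a + b + c) mod n | a b c. a \<in> gen_set emb \<beta> n h1 \<and> b \<in> gen_set emb \<beta> n h1 \<and> c \<in> gen_set emb \<beta> n h2}"
proof -
  have char: "CHAR('a) = 2" by (rule CHAR_eq_2_of_card) fact
  have emb: "field_hom emb" by (rule field_homI) fact+
  interpret emb: field_hom emb by (fact emb)
  interpret primitive_root_of_unity n \<beta>
    using assms(3,7,8) by unfold_locales (auto intro: odd_pos)
  have n_nonzero: "of_nat n \<noteq> (0::'b)"
    using emb.hom_of_nat[of n] of_nat_odd_CHAR_2[OF char \<open>odd n\<close>] by simp
  have C2: "finite C2" "word_subgroup C2"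
    using finite_cyclic_code cyclic_code_word_subgroup assms(10) by blast+
  have "C2 \<subseteq> C1" using assms(11) by (simp add: css_t_pair_def)
  then have "gen_set emb \<beta> n g2 \<subseteq> gen_set emb \<beta> n g1"
    by (rule emb.gen_set_mono[OF n_pos root assms(9,10)])
  moreover have "0 \<notin> {(a + b + c) mod n | a b c.
      a \<in> gen_set emb \<beta> n h1 \<and> b \<in> gen_set emb \<beta> n h1 \<and> c \<in> gen_set emb \<beta> n h2}"
  proof (rule zero_notin_gen_set_sums[OF emb char n_nonzero assms(12,12,13)])
    have "trace_code s C1 \<union> trace_code s C2 \<subseteq> {x. \<forall>j. x j \<in> {0, 1}}"
      using cyclic_code_gen_subset[OF assms(12)] cyclic_code_gen_subset[OF assms(13)] by blast
    then show "(\<Sum>j<n. x j * y j * z j) = 0"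
      if "x \<in> trace_code s C1" "y \<in> trace_code s C1" "z \<in> trace_code s C2" for x y z
      using css_t_pair_trace_triple_product[OF char assms(11) cyclic_code_word_subgroup[OF assms(9)]
          C2(2,1) _ that] by blast
  qed
  ultimately show ?thesis ..
qed

end
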